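(* Let $d>0$ be a constant, $k,b:\mathbb{R}_+\to\mathbb{R}_+$ measurable and bounded with $\int_0^{+\infty}k=+\infty$ and $1<\int_0^{+\infty}b(a)e^{-\int_0^ak}da<+\infty$; let $\eta_1,\eta_2,c_1,c_2,\tilde c_1,\tilde c_2\ge0$, $c_1^{tot}=\eta_1+c_1>0$, $c_2^{tot}=\eta_2+c_2$. Let $(n_1^*,N_2^* )$ be the unique non-trivial nonnegative steady state of $$\partial_tn_1+\partial_an_1=-\big(k(a)+c_1^{tot}N_1+c_2^{tot}N_2\big)n_1,\quad n_1(t,0)=\int_0^{+\infty}bn_1da,$$ $$\frac{dN_2}{dt}=-(d+\tilde c_1N_1+\tilde c_2N_2)N_2+\int_0^{+\infty}(k(a)+\eta_1N_1+\eta_2N_2)n_1da,\quad N_1=\int_0^{+\infty}n_1da.$$ Then $n_1^*(a)=n_1^*(0)e^{-\int_0^a(k(u)+\lambda_0)du}$ for all $a\ge0$, where $\lambda_0>0$ is the unique solution of $\int_0^{+\infty}b(a)e^{-\int_0^a(k(u)+\lambda_0)du}da=1$. *)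

theory Defs
  imports "HOL-Analysis.Analysis"
begin

definition surv :: "(real \<Rightarrow> real) \<Rightarrow> real \<Rightarrow> real \<Rightarrow> real" where
  "surv k lam a = exp (- (LINT u:{0..a}|lborel. (k u + lam)))"

definition solves_char_eq :: "(real \<Rightarrow> real) \<Rightarrow> (real \<Rightarrow> real) \<Rightarrow> real \<Rightarrow> bool" where
  "solves_char_eq k b lam \<longleftrightarrow>
     set_integrable lborel {0..} (\<lambda>a. b a * surv k lam a) \<and>
     (LINT a:{0..}|lborel. b a * surv k lam a) = 1"

text \<open>Nonnegative steady state (n1, N2) of the system; the transport equation
  \<partial>_a n1 = -(k + c1tot N1 + c2tot N2) n1 is understood in integrated
  (absolutely continuous) form, as k is only measurable.\<close>
definition steady_state ::
  "(real \<Rightarrow> real) \<Rightarrow> (real \<Rightarrow> real) \<Rightarrow> real \<Rightarrow> real \<Rightarrow> real \<Rightarrow> real \<Rightarrow> real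
   \<Rightarrow> real \<Rightarrow> real \<Rightarrow> (real \<Rightarrow> real) \<Rightarrow> real \<Rightarrow> bool" where
  "steady_state k b d \<eta>1 \<eta>2 c1 c2 ct1 ct2 n1 N2 \<longleftrightarrow>
     (\<forall>a\<ge>0. 0 \<le> n1 a) \<and> 0 \<le> N2 \<and> set_integrable lborel {0..} n1 \<and>
     (let N1 = (LINT a:{0..}|lborel. n1 a) in
       (\<forall>a\<ge>0. n1 a = n1 0 -
           (LINT u:{0..a}|lborel. (k u + (\<eta>1 + c1) * N1 + (\<eta>2 + c2) * N2) * n1 u)) \<and>
       n1 0 = (LINT a:{0..}|lborel. b a * n1 a) \<and>
       0 = - (d + ct1 * N1 + ct2 * N2) * N2
           + (LINT a:{0..}|lborel. (k a + \<eta>1 * N1 + \<eta>2 * N2) * n1 a))"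

definition nontrivial :: "(real \<Rightarrow> real) \<Rightarrow> real \<Rightarrow> bool" where
  "nontrivial n1 N2 \<longleftrightarrow> (\<exists>a\<ge>0. n1 a \<noteq> 0) \<or> N2 \<noteq> 0"

end

theory Submission
  imports Defs
begin

text \<open>With the totals frozen, the transport equation of a steady state is linear: for
  \<Lambda> = (\<eta>1 + c1) N1 + (\<eta>2 + c2) N2 it reads n1 a = n1 0 - \<integral>_0^a (k + \<Lambda>) n1, and its
  solution is n1 0 * surv k \<Lambda> a. As k is merely measurable there is no chain rule to
  verify this; instead n1 a * exp (\<integral>_0^a (k + \<Lambda>)) is shown to have increments of second
  order in t - s and hence to be constant. Nontriviality together with d > 0 forces n1 0 > 0,
  so the boundary condition n1 0 = \<integral> b n1 says that \<Lambda> solves the characteristic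
  equation. R0 > 1 rules out \<Lambda> = 0, and the root is unique because the characteristic
  integral is strictly decreasing in \<lambda>.\<close>

lemma quadratic_increments_imp_constant:
  fixes F :: "real \<Rightarrow> real"
  assumes S: "convex S"
    and incr: "\<And>s t. s \<in> S \<Longrightarrow> t \<in> S \<Longrightarrow> \<bar>F t - F s\<bar> \<le> C * (t - s)\<^sup>2"
    and "x \<in> S" "y \<in> S"
  shows "F x = F y"
proof -
  have "(F has_field_derivative 0) (at s within S)" if s: "s \<in> S" for s
    unfolding has_field_derivative_iff
  proof (rule Lim_null_comparison)
    have "\<bar>(F t - F s) / (t - s)\<bar> \<le> C * \<bar>t - s\<bar>" if "t \<in> S" "t \<noteq> s" for t
    proof -
      have "\<bar>F t - F s\<bar> \<le> C * \<bar>t - s\<bar> * \<bar>t - s\<bar>"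
        using incr[OF s that(1)] by (simp add: power2_eq_square)
      then show ?thesis
        using that(2) by (simp add: divide_le_eq)
    qed
    then show "\<forall>\<^sub>F t in at s within S. norm ((F t - F s) / (t - s)) \<le> C * \<bar>t - s\<bar>"
      by (auto simp: eventually_at_filter)
    show "((\<lambda>t. C * \<bar>t - s\<bar>) \<longlongrightarrow> 0) (at s within S)"
      by (intro tendsto_eq_intros) auto
  qed
  then obtain c where "\<forall>s\<in>S. F s = c"
    using has_field_derivative_zero_constant[OF S] by blast
  with assms(3,4) show ?thesis by simp
qed

lemma abs_exp_minus_sub_linear_le:
  fixes x :: real
  assumes "0 \<le> x"
  shows "\<bar>exp (- x) - (1 - x)\<bar> \<le> x\<^sup>2"
proof -
  have "1 - x + x\<^sup>2 = (x - 1/2)\<^sup>2 + 3/4"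
    by (simp add: power2_eq_square algebra_simps)
  then have "0 \<le> 1 - x + x\<^sup>2"
    by (metis add_nonneg_nonneg zero_le_power2 zero_le_divide_iff zero_le_numeral)
  then have "(1 - x + x\<^sup>2) * (1 + x) \<le> (1 - x + x\<^sup>2) * exp x"
    using exp_ge_add_one_self[of x] by (intro mult_left_mono) simp_all
  moreover have "1 \<le> (1 - x + x\<^sup>2) * (1 + x)"
    using assms by (simp add: algebra_simps power2_eq_square)
  ultimately have "exp (- x) \<le> 1 - x + x\<^sup>2"
    by (simp add: exp_minus field_simps)
  moreover have "1 - x \<le> exp (- x)"
    using exp_ge_add_one_self[of "- x"] by simp
  ultimately show ?thesis
    by simp
qed

locale linear_volterra =
  fixes h n :: "real \<Rightarrow> real" and L :: real
  assumes h_integrable: "h integrable_on {0..a}"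
    and hn_integrable: "(\<lambda>u. h u * n u) integrable_on {0..a}"
    and h_nonneg: "0 \<le> u \<Longrightarrow> 0 \<le> h u"
    and h_le: "0 \<le> u \<Longrightarrow> h u \<le> L"
    and n_nonneg: "0 \<le> u \<Longrightarrow> 0 \<le> n u"
    and n_eq: "0 \<le> a \<Longrightarrow> n a = n 0 - integral {0..a} (\<lambda>u. h u * n u)"
begin

lemma L_nonneg: "0 \<le> L"
  using h_nonneg[of 0] h_le[of 0] by simp

lemma integral_h_bounds:
  assumes "0 \<le> s" "s \<le> t"
  shows "0 \<le> integral {s..t} h" "integral {s..t} h \<le> L * (t - s)"
proof -
  have "h integrable_on {s..t}"
    using integrable_subinterval_real[OF h_integrable[of t]] assms by simp
  then have "integral {s..t} h \<le> integral {s..t} (\<lambda>_. L)"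
    using assms h_le by (intro integral_le) auto
  then show "integral {s..t} h \<le> L * (t - s)"
    using assms by (simp add: mult.commute)
  show "0 \<le> integral {s..t} h"
    using \<open>h integrable_on {s..t}\<close> assms h_nonneg by (intro integral_nonneg) auto
qed

lemma integral_h_split:
  assumes "0 \<le> s" "s \<le> t"
  shows "integral {0..t} h = integral {0..s} h + integral {s..t} h"
  using Henstock_Kurzweil_Integration.integral_combine[OF assms h_integrable] by simp

lemma n_increment:
  assumes "0 \<le> s" "s \<le> t"
  shows "n t = n s - integral {s..t} (\<lambda>u. h u * n u)"
  using Henstock_Kurzweil_Integration.integral_combine[OF assms hn_integrable] n_eq[of s] n_eq[of t] assms
  by simp

lemma n_le_n0:
  assumes "0 \<le> s"
  shows "n s \<le> n 0"
proof -
  have "0 \<le> integral {0..s} (\<lambda>u. h u * n u)"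
    using h_nonneg n_nonneg by (intro integral_nonneg hn_integrable) auto
  then show ?thesis
    using n_eq[OF assms] by linarith
qed

lemma integral_hn_bounds:
  assumes "0 \<le> s" "s \<le> t"
  shows "0 \<le> integral {s..t} (\<lambda>u. h u * n u)"
    "integral {s..t} (\<lambda>u. h u * n u) \<le> L * n 0 * (t - s)"
proof -
  have int: "(\<lambda>u. h u * n u) integrable_on {s..t}"
    using integrable_subinterval_real[OF hn_integrable[of t]] assms by simp
  have bounds: "0 \<le> h u * n u" "h u * n u \<le> L * n 0" if "u \<in> {s..t}" for u
    using that assms h_nonneg[of u] h_le[of u] n_nonneg[of u] n_le_n0[of u] L_nonneg
    by (auto intro: mult_mono)
  then show "0 \<le> integral {s..t} (\<lambda>u. h u * n u)"
    using int by (intro integral_nonneg) auto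
  have "integral {s..t} (\<lambda>u. h u * n u) \<le> integral {s..t} (\<lambda>_. L * n 0)"
    using int bounds by (intro integral_le) auto
  then show "integral {s..t} (\<lambda>u. h u * n u) \<le> L * n 0 * (t - s)"
    using assms by (simp add: mult_ac)
qed

lemma n_lipschitz:
  assumes "0 \<le> s" "s \<le> t"
  shows "\<bar>n t - n s\<bar> \<le> L * n 0 * (t - s)"
  using n_increment[OF assms] integral_hn_bounds[OF assms] by simp

lemma n_first_order_remainder:
  assumes "0 \<le> s" "s \<le> t"
  shows "\<bar>n t - n s * (1 - integral {s..t} h)\<bar> \<le> L\<^sup>2 * n 0 * (t - s)\<^sup>2"
proof -
  have h_int: "h integrable_on {s..t}" and hn_int: "(\<lambda>u. h u * n u) integrable_on {s..t}"
    using integrable_subinterval_real[OF h_integrable[of t]]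
      integrable_subinterval_real[OF hn_integrable[of t]] assms by simp_all
  have "n t - n s * (1 - integral {s..t} h)
      = integral {s..t} (\<lambda>u. h u * n s) - integral {s..t} (\<lambda>u. h u * n u)"
    using n_increment[OF assms] by (simp add: algebra_simps)
  also have "\<dots> = integral {s..t} (\<lambda>u. h u * (n s - n u))"
    using h_int hn_int by (simp add: integral_diff integrable_on_mult_left right_diff_distrib)
  finally have "\<bar>n t - n s * (1 - integral {s..t} h)\<bar>
      = norm (integral {s..t} (\<lambda>u. h u * (n s - n u)))"
    by simp
  also have "\<dots> \<le> integral {s..t} (\<lambda>_. L * (L * n 0 * (t - s)))"
  proof (rule integral_norm_bound_integral)
    show "(\<lambda>u. h u * (n s - n u)) integrable_on {s..t}"
      using h_int hn_int by (simp add: integrable_diff integrable_on_mult_left right_diff_distrib)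
    fix u assume u: "u \<in> {s..t}"
    have "L * n 0 * (u - s) \<le> L * n 0 * (t - s)"
      using u L_nonneg n_nonneg[of 0] by (intro mult_left_mono) auto
    then have "\<bar>n s - n u\<bar> \<le> L * n 0 * (t - s)"
      using n_lipschitz[of s u] u assms by (simp add: abs_minus_commute)
    then show "norm (h u * (n s - n u)) \<le> L * (L * n 0 * (t - s))"
      using u assms h_nonneg[of u] h_le[of u] by (auto simp: abs_mult intro: mult_mono)
  qed (rule integrable_const_ivl)
  also have "\<dots> = L\<^sup>2 * n 0 * (t - s)\<^sup>2"
    using assms by (simp add: power2_eq_square)
  finally show ?thesis .
qed

lemma n_exp_integral_increment:
  assumes "0 \<le> s" "s \<le> t" "t \<le> a"
  shows "\<bar>n t * exp (integral {0..t} h) - n s * exp (integral {0..s} h)\<bar>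
    \<le> 2 * L\<^sup>2 * n 0 * exp (L * a) * (t - s)\<^sup>2"
proof -
  define D where "D = integral {s..t} h"
  define r where "r = n t - n s * (1 - D)"
  have D: "0 \<le> D" "D \<le> L * (t - s)"
    using integral_h_bounds[OF assms(1,2)] by (simp_all add: D_def)
  have ns: "0 \<le> n s" "n s \<le> n 0"
    using n_nonneg[of s] n_le_n0[of s] assms by simp_all
  have "exp (integral {0..s} h) = exp (integral {0..t} h) * exp (- D)"
    using integral_h_split[OF assms(1,2)] by (simp add: D_def flip: exp_add)
  then have "n t * exp (integral {0..t} h) - n s * exp (integral {0..s} h)
      = exp (integral {0..t} h) * (n s * ((1 - D) - exp (- D)) + r)"
    by (simp add: r_def algebra_simps)
  also have "\<bar>\<dots>\<bar> \<le> exp (L * a) * (n 0 * D\<^sup>2 + L\<^sup>2 * n 0 * (t - s)\<^sup>2)"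
  proof -
    have "\<bar>n s * ((1 - D) - exp (- D))\<bar> = n s * \<bar>exp (- D) - (1 - D)\<bar>"
      using ns by (simp add: abs_mult abs_minus_commute)
    also have "\<dots> \<le> n 0 * D\<^sup>2"
      using ns abs_exp_minus_sub_linear_le[OF D(1)] by (intro mult_mono) simp_all
    finally have "\<bar>n s * ((1 - D) - exp (- D)) + r\<bar> \<le> n 0 * D\<^sup>2 + L\<^sup>2 * n 0 * (t - s)\<^sup>2"
      using n_first_order_remainder[OF assms(1,2)] unfolding r_def D_def by linarith
    moreover have "exp (integral {0..t} h) \<le> exp (L * a)"
      using integral_h_bounds[of 0 t] L_nonneg assms mult_left_mono[of t a L] by simp
    ultimately show ?thesis
      unfolding abs_mult by (intro mult_mono) simp_all
  qed
  also have "\<dots> \<le> exp (L * a) * (2 * L\<^sup>2 * n 0 * (t - s)\<^sup>2)"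
  proof -
    have "D\<^sup>2 \<le> L\<^sup>2 * (t - s)\<^sup>2"
      using power_mono[OF D(2), of 2] D(1) by (simp add: power_mult_distrib)
    then show ?thesis
      using ns by (intro mult_left_mono) (auto simp: algebra_simps intro: mult_left_mono)
  qed
  finally show ?thesis
    by (simp add: mult_ac)
qed

theorem n_eq_exp_integral:
  assumes "0 \<le> a"
  shows "n a = n 0 * exp (- integral {0..a} h)"
proof -
  define F where "F x = n x * exp (integral {0..x} h)" for x
  have incr: "\<bar>F t - F s\<bar> \<le> 2 * L\<^sup>2 * n 0 * exp (L * a) * (t - s)\<^sup>2"
    if "s \<in> {0..a}" "t \<in> {0..a}" for s t
  proof (cases "s \<le> t")
    case True
    then show ?thesis
      using n_exp_integral_increment[of s t a] that by (simp add: F_def)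
  next
    case False
    then have "\<bar>F s - F t\<bar> \<le> 2 * L\<^sup>2 * n 0 * exp (L * a) * (s - t)\<^sup>2"
      using n_exp_integral_increment[of t s a] that by (simp add: F_def)
    then show ?thesis
      by (simp only: abs_minus_commute power2_commute)
  qed
  have "F a = F 0"
    by (rule quadratic_increments_imp_constant[where S = "{0..a}", OF _ incr]) (use assms in auto)
  then have "n a * exp (integral {0..a} h) = n 0"
    by (simp add: F_def)
  then show ?thesis
    by (metis exp_minus_inverse mult.assoc mult.right_neutral)
qed

end

lemma set_borel_measurable_iff_restrict_space:
  fixes f :: "'a \<Rightarrow> 'b::real_normed_vector"
  assumes "S \<in> sets M"
  shows "set_borel_measurable M S f \<longleftrightarrow> f \<in> borel_measurable (restrict_space M S)"
  using assms by (simp add: set_borel_measurable_def borel_measurable_restrict_space_iff)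

lemma set_integrable_bounded_mult:
  fixes f g :: "real \<Rightarrow> real"
  assumes f: "set_borel_measurable lborel S f" and S: "S \<in> sets lborel"
    and bdd: "\<And>x. x \<in> S \<Longrightarrow> \<bar>f x\<bar> \<le> C" and g: "set_integrable lborel S g"
  shows "set_integrable lborel S (\<lambda>x. f x * g x)"
proof (rule set_integrable_bound)
  show "set_integrable lborel S (\<lambda>x. C * g x)"
    using g by simp
  have "set_borel_measurable lborel S g"
    using g unfolding set_integrable_def set_borel_measurable_def by (rule borel_measurable_integrable)
  with f S show "set_borel_measurable lborel S (\<lambda>x. f x * g x)"
    by (simp add: set_borel_measurable_iff_restrict_space)
  show "AE x in lborel. x \<in> S \<longrightarrow> norm (f x * g x) \<le> norm (C * g x)"
  proof (rule AE_I2, rule impI)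
    fix x assume "x \<in> S"
    then have "\<bar>f x\<bar> * \<bar>g x\<bar> \<le> C * \<bar>g x\<bar>" "0 \<le> C"
      using bdd[of x] by (auto intro: mult_right_mono)
    then show "norm (f x * g x) \<le> norm (C * g x)"
      by (simp add: abs_mult)
  qed
qed

lemma set_integrable_Icc_bounded:
  fixes f :: "real \<Rightarrow> real"
  assumes "set_borel_measurable lborel S f" "{a..b} \<subseteq> S" "\<And>x. x \<in> S \<Longrightarrow> \<bar>f x\<bar> \<le> C"
  shows "set_integrable lborel {a..b} f"
proof -
  have "set_borel_measurable lborel {a..b} f"
    by (rule set_borel_measurable_subset[OF assms(1) _ assms(2)]) simp
  moreover have "set_integrable lborel {a..b} (\<lambda>_. 1 :: real)"
    by (rule borel_integrable_atLeastAtMost'[OF continuous_on_const])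
  ultimately have "set_integrable lborel {a..b} (\<lambda>x. f x * 1)"
    using assms(2,3) by (intro set_integrable_bounded_mult[where C = C]) auto
  then show ?thesis
    by simp
qed

lemma integrated_transport_solution:
  fixes k n :: "real \<Rightarrow> real"
  assumes k_meas: "set_borel_measurable lborel {0..} k"
    and k_nonneg: "\<forall>a\<ge>0. 0 \<le> k a" and k_bdd: "\<exists>M. \<forall>a\<ge>0. k a \<le> M" and "0 \<le> \<Lambda>"
    and n_nonneg: "\<forall>a\<ge>0. 0 \<le> n a" and n_int: "set_integrable lborel {0..} n"
    and n_eq: "\<forall>a\<ge>0. n a = n 0 - (LINT u:{0..a}|lborel. (k u + \<Lambda>) * n u)"
    and "0 \<le> a"
  shows "n a = n 0 * surv k \<Lambda> a"
proof -
  obtain M where M: "\<forall>a\<ge>0. k a \<le> M"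
    using k_bdd by blast
  have h_meas: "set_borel_measurable lborel {0..x} (\<lambda>u. k u + \<Lambda>)" for x
  proof (rule set_borel_measurable_subset)
    show "set_borel_measurable lborel {0..} (\<lambda>u. k u + \<Lambda>)"
      using k_meas by (simp add: set_borel_measurable_iff_restrict_space)
  qed auto
  have h_bdd: "\<bar>k u + \<Lambda>\<bar> \<le> M + \<Lambda>" if "u \<in> {0..x}" for u x
    using that M k_nonneg \<open>0 \<le> \<Lambda>\<close> by auto
  have h_int: "set_integrable lborel {0..x} (\<lambda>u. k u + \<Lambda>)" for x
    by (rule set_integrable_Icc_bounded[OF h_meas order_refl h_bdd])
  have hn_int: "set_integrable lborel {0..x} (\<lambda>u. (k u + \<Lambda>) * n u)" for x
    by (rule set_integrable_bounded_mult[OF h_meas _ h_bdd set_integrable_subset[OF n_int]]) auto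
  interpret linear_volterra "\<lambda>u. k u + \<Lambda>" n "M + \<Lambda>"
  proof
    show "(\<lambda>u. k u + \<Lambda>) integrable_on {0..x}" for x
      using set_borel_integral_eq_integral(1)[OF h_int] .
    show "(\<lambda>u. (k u + \<Lambda>) * n u) integrable_on {0..x}" for x
      using set_borel_integral_eq_integral(1)[OF hn_int] .
    show "0 \<le> k u + \<Lambda>" "k u + \<Lambda> \<le> M + \<Lambda>" "0 \<le> n u" if "0 \<le> u" for u
      using that k_nonneg M n_nonneg \<open>0 \<le> \<Lambda>\<close> by auto
    show "n x = n 0 - integral {0..x} (\<lambda>u. (k u + \<Lambda>) * n u)" if "0 \<le> x" for x
      using n_eq that unfolding set_borel_integral_eq_integral(2)[OF hn_int] by blast
  qed
  show ?thesis
    unfolding surv_def set_borel_integral_eq_integral(2)[OF h_int]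
    by (rule n_eq_exp_integral[OF \<open>0 \<le> a\<close>])
qed

lemma surv_add_const:
  assumes "set_integrable lborel {0..x} k" "0 \<le> x"
  shows "surv k lam x = surv k 0 x * exp (- (lam * x))"
proof -
  have const: "set_integrable lborel {0..x} (\<lambda>_. lam)"
    by (rule borel_integrable_atLeastAtMost'[OF continuous_on_const])
  have "(LINT u:{0..x}|lborel. k u + lam) = (LINT u:{0..x}|lborel. k u) + (LINT u:{0..x}|lborel. lam)"
    by (rule set_integral_add(2)[OF assms(1) const])
  also have "(LINT u:{0..x}|lborel. lam) = lam * x"
    using set_borel_integral_eq_integral(2)[OF const] assms(2) by simp
  finally show ?thesis
    by (simp add: surv_def flip: exp_add)
qed

lemma char_integral_strict_antimono:
  fixes k b :: "real \<Rightarrow> real"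
  assumes b_nonneg: "\<forall>a\<ge>0. 0 \<le> b a"
    and k_int: "\<And>x. 0 \<le> x \<Longrightarrow> set_integrable lborel {0..x} k"
    and R0: "(\<integral>\<^sup>+ a\<in>{0..}. ennreal (b a * surv k 0 a) \<partial>lborel) \<noteq> 0"
    and int1: "set_integrable lborel {0..} (\<lambda>a. b a * surv k l1 a)"
    and int2: "set_integrable lborel {0..} (\<lambda>a. b a * surv k l2 a)"
    and "l1 < l2"
  shows "(LINT a:{0..}|lborel. b a * surv k l2 a) < (LINT a:{0..}|lborel. b a * surv k l1 a)"
proof (rule ccontr)
  define f where "f = (\<lambda>a. indicator {0..} a *\<^sub>R (b a * surv k l1 a - b a * surv k l2 a))"
  have diff: "b a * surv k l1 a - b a * surv k l2 a
      = b a * surv k 0 a * (exp (- (l1 * a)) - exp (- (l2 * a)))" if "0 \<le> a" for a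
    using surv_add_const[OF k_int[OF that] that, of l1] surv_add_const[OF k_int[OF that] that, of l2]
    by (simp add: algebra_simps)
  have surv_pos: "0 < surv k 0 a" for a
    by (simp add: surv_def)
  have f_int: "integrable lborel f"
    using set_integral_diff(1)[OF int1 int2] by (simp add: set_integrable_def f_def)
  have f_nonneg: "0 \<le> f a" for a
  proof (cases "0 \<le> a")
    case True
    then have "exp (- (l2 * a)) \<le> exp (- (l1 * a))"
      using \<open>l1 < l2\<close> by (simp add: mult_right_mono)
    then show ?thesis
      using True diff[OF True] b_nonneg surv_pos[of a] by (simp add: f_def)
  qed (simp add: f_def)
  assume "\<not> ?thesis"
  then have "integral\<^sup>L lborel f \<le> 0"
    using set_integral_diff(2)[OF int1 int2] by (simp add: set_lebesgue_integral_def f_def)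
  moreover have "0 \<le> integral\<^sup>L lborel f"
    using f_nonneg by (simp add: Bochner_Integration.integral_nonneg)
  ultimately have "integral\<^sup>L lborel f = 0"
    by simp
  then have "AE a in lborel. f a = 0"
    using integral_nonneg_eq_0_iff_AE[OF f_int] f_nonneg by simp
  then have "AE a in lborel. ennreal (b a * surv k 0 a) * indicator {0..} a = 0"
    using AE_lborel_singleton[of 0]
  proof eventually_elim
    case (elim a)
    show ?case
    proof (cases "0 < a")
      case True
      then have "exp (- (l2 * a)) < exp (- (l1 * a))"
        using \<open>l1 < l2\<close> by simp
      then show ?thesis
        using elim True diff[of a] by (auto simp: f_def)
    qed (use elim in auto)
  qed
  then have "(\<integral>\<^sup>+ a\<in>{0..}. ennreal (b a * surv k 0 a) \<partial>lborel) = 0"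
    using nn_integral_cong_AE by fastforce
  with R0 show False ..
qed

lemma solves_char_eq_unique:
  fixes k b :: "real \<Rightarrow> real"
  assumes k_meas: "set_borel_measurable lborel {0..} k"
    and k_nonneg: "\<forall>a\<ge>0. 0 \<le> k a" and k_bdd: "\<exists>M. \<forall>a\<ge>0. k a \<le> M"
    and "\<forall>a\<ge>0. 0 \<le> b a" "(\<integral>\<^sup>+ a\<in>{0..}. ennreal (b a * surv k 0 a) \<partial>lborel) \<noteq> 0"
    and "solves_char_eq k b l1" "solves_char_eq k b l2"
  shows "l1 = l2"
proof -
  obtain M where "\<forall>a\<ge>0. k a \<le> M"
    using k_bdd by blast
  then have k_int: "set_integrable lborel {0..x} k" for x
    using k_nonneg by (intro set_integrable_Icc_bounded[OF k_meas, of 0 x M]) auto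
  show ?thesis
  proof (cases l1 l2 rule: linorder_cases)
    case less
    with assms k_int show ?thesis
      using char_integral_strict_antimono[of b k l1 l2] by (simp add: solves_char_eq_def)
  next
    case greater
    with assms k_int show ?thesis
      using char_integral_strict_antimono[of b k l2 l1] by (simp add: solves_char_eq_def)
  qed
qed

lemma solves_char_eq_nn_integral:
  assumes "\<forall>a\<ge>0. 0 \<le> b a" "solves_char_eq k b lam"
  shows "(\<integral>\<^sup>+ a\<in>{0..}. ennreal (b a * surv k lam a) \<partial>lborel) = 1"
proof -
  have "(\<integral>\<^sup>+ a\<in>{0..}. ennreal (b a * surv k lam a) \<partial>lborel)
      = (\<integral>\<^sup>+ a. ennreal (indicator {0..} a *\<^sub>R (b a * surv k lam a)) \<partial>lborel)"
    by (intro nn_integral_cong) (auto split: split_indicator)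
  also have "\<dots> = ennreal (integral\<^sup>L lborel (\<lambda>a. indicator {0..} a *\<^sub>R (b a * surv k lam a)))"
    using assms by (intro nn_integral_eq_integral)
      (auto simp: solves_char_eq_def set_integrable_def surv_def split: split_indicator)
  also have "\<dots> = 1"
    using assms(2) by (simp add: solves_char_eq_def set_lebesgue_integral_def)
  finally show ?thesis .
qed

lemma solves_char_eq_if_profile:
  assumes "0 < n 0" and profile: "\<forall>a\<ge>0. n a = n 0 * surv k lam a"
    and birth: "n 0 = (LINT a:{0..}|lborel. b a * n a)"
  shows "solves_char_eq k b lam"
proof -
  have bn_int: "set_integrable lborel {0..} (\<lambda>a. b a * n a)"
  proof (rule ccontr)
    assume "\<not> ?thesis"
    then have "(LINT a:{0..}|lborel. b a * n a) = 0"
      unfolding set_integrable_def set_lebesgue_integral_def by (rule not_integrable_integral_eq)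
    with birth \<open>0 < n 0\<close> show False
      by linarith
  qed
  have scaled: "b a * surv k lam a = (1 / n 0) * (b a * n a)" if "a \<in> {0..}" for a
  proof -
    have "n a = n 0 * surv k lam a"
      using profile[rule_format, of a] that by simp
    with \<open>0 < n 0\<close> show ?thesis
      by simp
  qed
  have "set_integrable lborel {0..} (\<lambda>a. b a * surv k lam a)
      \<longleftrightarrow> set_integrable lborel {0..} (\<lambda>a. 1 / n 0 * (b a * n a))"
    by (rule set_integrable_cong) (simp_all add: scaled)
  with bn_int have "set_integrable lborel {0..} (\<lambda>a. b a * surv k lam a)"
    by simp
  moreover have "(LINT a:{0..}|lborel. b a * surv k lam a) = (LINT a:{0..}|lborel. 1 / n 0 * (b a * n a))"
    by (rule set_lebesgue_integral_cong) (simp_all add: scaled)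
  then have "(LINT a:{0..}|lborel. b a * surv k lam a) = 1"
    using birth \<open>0 < n 0\<close> by simp
  ultimately show ?thesis
    by (simp add: solves_char_eq_def)
qed

lemma steady_stateD:
  assumes "steady_state k b d \<eta>1 \<eta>2 c1 c2 ct1 ct2 n1 N2"
  defines "N1 \<equiv> LINT a:{0..}|lborel. n1 a"
  shows "\<forall>a\<ge>0. 0 \<le> n1 a" "0 \<le> N2" "set_integrable lborel {0..} n1"
    "\<forall>a\<ge>0. n1 a = n1 0 - (LINT u:{0..a}|lborel. (k u + ((\<eta>1 + c1) * N1 + (\<eta>2 + c2) * N2)) * n1 u)"
    "n1 0 = (LINT a:{0..}|lborel. b a * n1 a)"
    "0 = - (d + ct1 * N1 + ct2 * N2) * N2 + (LINT a:{0..}|lborel. (k a + \<eta>1 * N1 + \<eta>2 * N2) * n1 a)"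
  using assms(1) unfolding steady_state_def Let_def N1_def add.assoc by blast+

lemma nontrivial_steady_state_n1_0_pos:
  assumes "0 < d" "0 \<le> ct2" and ss: "steady_state k b d \<eta>1 \<eta>2 c1 c2 ct1 ct2 n1 N2"
    and "nontrivial n1 N2" and profile: "\<forall>a\<ge>0. n1 a = n1 0 * f a"
  shows "0 < n1 0"
proof (rule ccontr)
  note ss_facts = steady_stateD[OF ss]
  assume "\<not> 0 < n1 0"
  then have "n1 0 = 0"
    using ss_facts(1) by force
  then have zero: "\<forall>a\<ge>0. n1 a = 0"
    using profile by (metis mult_zero_left)
  have "(LINT a:{0..}|lborel. g a * n1 a) = 0" for g :: "real \<Rightarrow> real"
    using zero by (subst set_lebesgue_integral_cong[where g = "\<lambda>_. 0"]) auto
  moreover have "(LINT a:{0..}|lborel. n1 a) = 0"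
    using zero by (subst set_lebesgue_integral_cong[where g = "\<lambda>_. 0"]) auto
  ultimately have "(d + ct2 * N2) * N2 = 0"
    using ss_facts(6) by (simp only: mult_zero_right add_0_right)
  moreover have "0 < d + ct2 * N2"
    using assms(1,2) ss_facts(2) by (simp add: add_pos_nonneg)
  ultimately have "N2 = 0"
    by simp
  with zero \<open>nontrivial n1 N2\<close> show False
    by (auto simp: nontrivial_def)
qed

theorem proposition5:
  fixes k b n1 :: "real \<Rightarrow> real"
    and d \<eta>1 \<eta>2 c1 c2 ct1 ct2 N2 :: real
  assumes d_pos: "d > 0"
    and k_meas: "set_borel_measurable lborel {0..} k"
    and b_meas: "set_borel_measurable lborel {0..} b"
    and k_nonneg: "\<forall>a\<ge>0. 0 \<le> k a" and b_nonneg: "\<forall>a\<ge>0. 0 \<le> b a"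
    and k_bdd: "\<exists>M. \<forall>a\<ge>0. k a \<le> M" and b_bdd: "\<exists>M. \<forall>a\<ge>0. b a \<le> M"
    and k_int_inf: "(\<integral>\<^sup>+ a\<in>{0..}. ennreal (k a) \<partial>lborel) = \<infinity>"
    and R0_gt1: "1 < (\<integral>\<^sup>+ a\<in>{0..}. ennreal (b a * surv k 0 a) \<partial>lborel)"
    and R0_fin: "(\<integral>\<^sup>+ a\<in>{0..}. ennreal (b a * surv k 0 a) \<partial>lborel) < \<infinity>"
    and params: "\<eta>1 \<ge> 0" "\<eta>2 \<ge> 0" "c1 \<ge> 0" "c2 \<ge> 0" "ct1 \<ge> 0" "ct2 \<ge> 0"
    and c1tot_pos: "\<eta>1 + c1 > 0"
    and ss: "steady_state k b d \<eta>1 \<eta>2 c1 c2 ct1 ct2 n1 N2"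
    and ss_nontriv: "nontrivial n1 N2"
    and ss_unique: "\<forall>m M. steady_state k b d \<eta>1 \<eta>2 c1 c2 ct1 ct2 m M \<and> nontrivial m M
                      \<longrightarrow> (\<forall>a\<ge>0. m a = n1 a) \<and> M = N2"
  shows "\<exists>lam0>0. solves_char_eq k b lam0 \<and> (\<forall>lam. solves_char_eq k b lam \<longrightarrow> lam = lam0) \<and>
           (\<forall>a\<ge>0. n1 a = n1 0 * surv k lam0 a)"
proof -
  define N1 where "N1 = (LINT a:{0..}|lborel. n1 a)"
  define \<Lambda> where "\<Lambda> = (\<eta>1 + c1) * N1 + (\<eta>2 + c2) * N2"
  note ss_facts = steady_stateD[OF ss, folded N1_def, folded \<Lambda>_def]
  have "0 \<le> N1"
    unfolding N1_def set_lebesgue_integral_def using ss_facts(1)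
    by (intro Bochner_Integration.integral_nonneg) (simp add: indicator_def)
  then have "0 \<le> \<Lambda>"
    using ss_facts(2) params(1-4) by (simp add: \<Lambda>_def)
  have profile: "\<forall>a\<ge>0. n1 a = n1 0 * surv k \<Lambda> a"
    using integrated_transport_solution[OF k_meas k_nonneg k_bdd \<open>0 \<le> \<Lambda>\<close> ss_facts(1,3,4)] by blast
  have "0 < n1 0"
    using nontrivial_steady_state_n1_0_pos[OF d_pos params(6) ss ss_nontriv profile] .
  then have char: "solves_char_eq k b \<Lambda>"
    using solves_char_eq_if_profile[OF _ profile ss_facts(5)] by blast
  have "0 < \<Lambda>"
    using \<open>0 \<le> \<Lambda>\<close> solves_char_eq_nn_integral[OF b_nonneg char] R0_gt1 by (cases "\<Lambda> = 0") auto
  moreover have "lam = \<Lambda>" if "solves_char_eq k b lam" for lam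
    using R0_gt1 by (intro solves_char_eq_unique[OF k_meas k_nonneg k_bdd b_nonneg _ that char]) auto
  ultimately show ?thesis
    using char profile by blast
qed

end
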